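(* Let $(n_m,k_m)_{m\ge1}$ be a sequence of pairs of integers with $k_m\ge 2$ and $n_m\ge k_m$, and let $P_m$ be the probability that a uniformly random composition of $n_m$ into $k_m$ positive parts has two equal parts (i.e. $x_i=x_j$ for some $i<j$). If $n_m/k_m^3\to\infty$ then $P_m\to 0$; if $n_m/k_m^3\to 0$ then $P_m\to 1$. Equivalently, writing $\mathcal D(n,k)$ for the number of compositions of $n$ into $k$ pairwise distinct positive parts and $\mathcal C(n,k)=\binom{n-1}{k-1}$, we have $\mathcal D(n,k)/\mathcal C(n,k)\to 1$ as $n/k^3\to\infty$ and $\mathcal D(n,k)/\mathcal C(n,k)\to 0$ as $n/k^3\to 0$.
   Context: A composition of a positive integer $n$ into $k$ positive parts is a sequence $(x_1,\dots,x_k)$ of positive integers with $x_1+\dots+x_k=n$; there are $\binom{n-1}{k-1}$ of them, and "uniformly random" means each is chosen with equal probability. *)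

theory Defs
  imports "HOL-Analysis.Analysis"
begin

definition compositions :: "nat \<Rightarrow> nat \<Rightarrow> nat list set" where
  "compositions n k = {xs. length xs = k \<and> (\<forall>x\<in>set xs. 0 < x) \<and> sum_list xs = n}"

definition prob_equal_parts :: "nat \<Rightarrow> nat \<Rightarrow> real" where
  "prob_equal_parts n k =
     real (card {xs \<in> compositions n k. \<exists>i j. i < j \<and> j < k \<and> xs ! i = xs ! j})
     / real (card (compositions n k))"

end

theory Submission
  imports Defs "HOL-Combinatorics.Multiset_Permutations"
begin

(* Let C(n,k) = (n-1 choose k-1) be the number of compositions of n into k parts.

   Equal parts are rare when n/k^3 is large: for fixed positions i < j, adding part j to
   part i and deleting part j injects the compositions with x_i = x_j into the compositions
   of n into k-1 parts.  Hence at most k^2 (n-1 choose k-2) compositions have two equal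
   parts, and (n-1 choose k-2) / C(n,k) = (k-1)/(n-k+1), so the probability is O(k^3/n).

   Distinct parts are rare when n/k^3 is small: a composition with distinct parts is an
   ordering of a k-set of positive integers with sum n (a strict partition), so there are at
   most k! Q(n,k) of them, Q counting strict partitions.  Subtracting 1 from every element
   (and dropping the element 1 if present) gives Q(n,k) <= Q(n-k,k) + Q(n-k,k-1); combined
   with a convexity inequality for binomial coefficients this yields by induction
   k! Q(n,k) <= (n-1-s_k choose k-1), where s_k = sum_{i<k} floor(i/2) ~ k^2/4.  Finally
   (m-s choose r) <= (m choose r) (1-r/m)^s <= (m choose r) m/(r s) and r s >= k^3/16 give
   a probability of distinct parts of at most 16 n/k^3. *)

section \<open>Counting compositions\<close>

lemma finite_compositions: "finite (compositions n k)"
proof -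
  have "compositions n k \<subseteq> {xs. set xs \<subseteq> {0..n} \<and> length xs = k}"
    unfolding compositions_def using member_le_sum_list by fastforce
  thus ?thesis using finite_lists_length_eq[of "{0..n}" k] finite_subset by auto
qed

lemma compositions_eq_map_Suc:
  assumes "k \<le> n"
  shows "compositions n k = map Suc ` {l. length l = k \<and> sum_list l = n - k}"
proof (intro set_eqI iffI)
  fix xs assume xs: "xs \<in> compositions n k"
  define l where "l = map (\<lambda>x. x - 1) xs"
  have "\<forall>x\<in>set xs. 0 < x" using xs unfolding compositions_def by auto
  hence xs_l: "xs = map Suc l" unfolding l_def by (induction xs) auto
  have "sum_list xs = sum_list l + length l"
    unfolding xs_l using sum_list_Suc[of id l] by simp
  hence "l \<in> {l. length l = k \<and> sum_list l = n - k}"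
    using xs unfolding compositions_def by (simp add: l_def) linarith
  thus "xs \<in> map Suc ` {l. length l = k \<and> sum_list l = n - k}"
    using xs_l by blast
next
  fix xs assume "xs \<in> map Suc ` {l. length l = k \<and> sum_list l = n - k}"
  then obtain l where "length l = k" "sum_list l = n - k" "xs = map Suc l" by auto
  moreover have "sum_list (map Suc l) = sum_list l + length l"
    using sum_list_Suc[of id l] by simp
  ultimately show "xs \<in> compositions n k" using assms unfolding compositions_def by auto
qed

lemma card_compositions:
  assumes "1 \<le> k" "k \<le> n"
  shows "card (compositions n k) = (n - 1) choose (k - 1)"
proof -
  have "card (compositions n k) = card {l::nat list. length l = k \<and> sum_list l = n - k}"
    unfolding compositions_eq_map_Suc[OF assms(2)]
    by (intro card_image inj_on_subset[OF inj_mapI[OF inj_Suc]]) simp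
  also have "\<dots> = (n - k + k - 1) choose (n - k)" by (rule card_length_sum_list)
  also have "\<dots> = (n - 1) choose (k - 1)"
    using assms binomial_symmetric[of "k - 1" "n - 1"] by auto
  finally show ?thesis .
qed

lemma card_compositions_pos: "1 \<le> k \<Longrightarrow> k \<le> n \<Longrightarrow> 0 < card (compositions n k)"
  using card_compositions[of k n] by (simp del: binomial_Suc_Suc)

definition equal_part_compositions :: "nat \<Rightarrow> nat \<Rightarrow> nat list set" where
  "equal_part_compositions n k =
     {xs \<in> compositions n k. \<exists>i j. i < j \<and> j < k \<and> xs ! i = xs ! j}"

definition distinct_compositions :: "nat \<Rightarrow> nat \<Rightarrow> nat list set" where
  "distinct_compositions n k = {xs \<in> compositions n k. distinct xs}"

lemma not_distinct_conv_nth: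
  "\<not> distinct xs \<longleftrightarrow> (\<exists>i j. i < j \<and> j < length xs \<and> xs ! i = xs ! j)"
proof
  assume "\<not> distinct xs"
  then obtain i j where ij: "i < length xs" "j < length xs" "i \<noteq> j" "xs ! i = xs ! j"
    by (auto simp: distinct_conv_nth)
  show "\<exists>i j. i < j \<and> j < length xs \<and> xs ! i = xs ! j"
  proof (cases "i < j")
    case True
    with ij show ?thesis by (intro exI[of _ i] exI[of _ j]) auto
  next
    case False
    with ij show ?thesis by (intro exI[of _ j] exI[of _ i]) auto
  qed
next
  assume "\<exists>i j. i < j \<and> j < length xs \<and> xs ! i = xs ! j"
  then obtain i j where "i < j" "j < length xs" "xs ! i = xs ! j" by blast
  thus "\<not> distinct xs" using nth_eq_iff_index_eq[of xs i j] by auto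
qed

lemma card_equal_part_compositions:
  "card (equal_part_compositions n k) = card (compositions n k) - card (distinct_compositions n k)"
proof -
  have "equal_part_compositions n k = compositions n k - distinct_compositions n k"
    unfolding equal_part_compositions_def distinct_compositions_def compositions_def
    using not_distinct_conv_nth by auto
  thus ?thesis
    by (simp add: card_Diff_subset finite_compositions distinct_compositions_def)
qed

lemma prob_equal_parts_eq:
  "prob_equal_parts n k = real (card (equal_part_compositions n k)) / real (card (compositions n k))"
  unfolding prob_equal_parts_def equal_part_compositions_def ..

lemma prob_equal_parts_nonneg: "0 \<le> prob_equal_parts n k"
  unfolding prob_equal_parts_def by simp

lemma one_minus_prob_equal_parts:
  assumes "0 < card (compositions n k)"
  shows "1 - prob_equal_parts n k =
           real (card (distinct_compositions n k)) / real (card (compositions n k))"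
proof -
  have "card (distinct_compositions n k) \<le> card (compositions n k)"
    by (intro card_mono finite_compositions) (auto simp: distinct_compositions_def)
  thus ?thesis using assms
    by (simp add: prob_equal_parts_eq card_equal_part_compositions field_simps)
qed

lemma prob_equal_parts_le_1: "prob_equal_parts n k \<le> 1"
proof (cases "card (compositions n k) = 0")
  case False
  hence "0 \<le> 1 - prob_equal_parts n k" by (simp add: one_minus_prob_equal_parts)
  thus ?thesis by simp
qed (simp add: prob_equal_parts_eq)

section \<open>Compositions with two equal parts\<close>

definition merge_parts :: "nat \<Rightarrow> nat \<Rightarrow> nat list \<Rightarrow> nat list" where
  "merge_parts i j xs = (let ys = xs[i := xs ! i + xs ! j] in take j ys @ drop (Suc j) ys)"

lemma length_merge_parts: "j < length xs \<Longrightarrow> length (merge_parts i j xs) = length xs - 1"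
  unfolding merge_parts_def Let_def by simp

lemma nth_merge_parts_below:
  assumes "i < j" "j < length xs" "t < j"
  shows "merge_parts i j xs ! t = (if t = i then xs ! i + xs ! j else xs ! t)"
  using assms unfolding merge_parts_def Let_def by (auto simp: nth_append)

lemma nth_merge_parts_above:
  assumes "i < j" "j \<le> t" "Suc t < length xs"
  shows "merge_parts i j xs ! t = xs ! Suc t"
  using assms unfolding merge_parts_def Let_def by (auto simp: nth_append)

lemma sum_list_merge_parts:
  assumes "i < j" "j < length xs"
  shows "sum_list (merge_parts i j xs) = sum_list xs"
proof -
  define ys where "ys = xs[i := xs ! i + xs ! j]"
  have "ys = take j ys @ ys ! j # drop (Suc j) ys"
    by (rule id_take_nth_drop) (simp add: ys_def assms)
  hence "sum_list ys = sum_list (take j ys @ drop (Suc j) ys) + ys ! j"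
    by (metis add.commute add.left_commute sum_list.Cons sum_list_append)
  moreover have "ys ! j = xs ! j" using assms by (simp add: ys_def)
  moreover have "sum_list ys = sum_list xs + xs ! j"
    using sum_list_update[of i xs] elem_le_sum_list[of i xs] assms by (simp add: ys_def)
  ultimately show ?thesis unfolding merge_parts_def Let_def ys_def[symmetric] by simp
qed

lemma set_merge_parts: "set (merge_parts i j xs) \<subseteq> insert (xs ! i + xs ! j) (set xs)"
  unfolding merge_parts_def Let_def
  using set_update_subset_insert[of xs i] by (auto dest!: in_set_takeD in_set_dropD)

lemma inj_on_merge_parts:
  assumes "i < j" "j < k"
  shows "inj_on (merge_parts i j) {xs. length xs = k \<and> xs ! i = xs ! j}"
proof (rule inj_onI)
  fix xs zs
  assume xs: "xs \<in> {xs. length xs = k \<and> xs ! i = xs ! j}"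
     and zs: "zs \<in> {xs. length xs = k \<and> xs ! i = xs ! j}"
     and eq: "merge_parts i j xs = merge_parts i j zs"
  have "xs ! i + xs ! j = zs ! i + zs ! j"
    using arg_cong[OF eq, of "\<lambda>ys. ys ! i"] xs zs assms by (simp add: nth_merge_parts_below)
  hence ij: "xs ! i = zs ! i" "xs ! j = zs ! j" using xs zs by auto
  show "xs = zs"
  proof (rule nth_equalityI)
    show "length xs = length zs" using xs zs by simp
    fix t assume "t < length xs"
    hence t: "t < k" using xs by simp
    consider "t = i \<or> t = j" | "t < j" "t \<noteq> i" | "j < t" by linarith
    thus "xs ! t = zs ! t"
    proof cases
      case 2
      thus ?thesis using arg_cong[OF eq, of "\<lambda>ys. ys ! t"] xs zs assms
        by (simp add: nth_merge_parts_below)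
    next
      case 3
      hence "Suc (t - 1) = t" "j \<le> t - 1" by auto
      thus ?thesis using arg_cong[OF eq, of "\<lambda>ys. ys ! (t - 1)"] xs zs assms t
        by (simp add: nth_merge_parts_above)
    qed (use ij in auto)
  qed
qed

lemma merge_parts_compositions:
  assumes "i < j" "j < k" "xs \<in> compositions n k"
  shows "merge_parts i j xs \<in> compositions n (k - 1)"
proof -
  have xs: "length xs = k" "\<forall>x\<in>set xs. 0 < x" "sum_list xs = n"
    using assms(3) unfolding compositions_def by auto
  have "0 < xs ! i + xs ! j" using xs assms by simp
  thus ?thesis using xs assms set_merge_parts[of i j xs]
    by (auto simp: compositions_def length_merge_parts sum_list_merge_parts)
qed

lemma card_equal_pair:
  assumes "i < j" "j < k" "k \<le> n"
  shows "card {xs \<in> compositions n k. xs ! i = xs ! j} \<le> (n - 1) choose (k - 2)"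
proof -
  have "card {xs \<in> compositions n k. xs ! i = xs ! j} \<le> card (compositions n (k - 1))"
  proof (rule card_inj_on_le[OF _ _ finite_compositions])
    show "inj_on (merge_parts i j) {xs \<in> compositions n k. xs ! i = xs ! j}"
      by (rule inj_on_subset[OF inj_on_merge_parts[OF assms(1,2)]])
         (auto simp: compositions_def)
    show "merge_parts i j ` {xs \<in> compositions n k. xs ! i = xs ! j} \<subseteq> compositions n (k - 1)"
      using merge_parts_compositions[OF assms(1,2)] by blast
  qed
  also have "\<dots> = (n - 1) choose (k - 2)"
    using card_compositions[of "k - 1" n] assms by (simp add: numeral_2_eq_2)
  finally show ?thesis .
qed

text \<open>A union bound over the fewer than k^2 pairs of positions.\<close>
lemma card_equal_part_compositions_le:
  assumes "k \<le> n"
  shows "card (equal_part_compositions n k) \<le> k * k * ((n - 1) choose (k - 2))"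
proof -
  define I where "I = {(i, j). i < j \<and> j < k}"
  define E where "E p = {xs \<in> compositions n k. xs ! fst p = xs ! snd p}" for p :: "nat \<times> nat"
  have I_sub: "I \<subseteq> {..<k} \<times> {..<k}" unfolding I_def by auto
  hence fin_I: "finite I" by (rule finite_subset) simp
  have "equal_part_compositions n k \<subseteq> (\<Union>p\<in>I. E p)"
  proof
    fix xs assume "xs \<in> equal_part_compositions n k"
    then obtain i j where "xs \<in> compositions n k" "i < j" "j < k" "xs ! i = xs ! j"
      unfolding equal_part_compositions_def by blast
    hence "(i, j) \<in> I" "xs \<in> E (i, j)" unfolding I_def E_def by auto
    thus "xs \<in> (\<Union>p\<in>I. E p)" by blast
  qed
  hence "card (equal_part_compositions n k) \<le> card (\<Union>p\<in>I. E p)"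
    by (intro card_mono) (auto simp: fin_I E_def finite_compositions)
  also have "\<dots> \<le> (\<Sum>p\<in>I. card (E p))" by (rule card_UN_le[OF fin_I])
  also have "\<dots> \<le> (\<Sum>p\<in>I. (n - 1) choose (k - 2))"
  proof (rule sum_mono)
    fix p assume "p \<in> I"
    then obtain i j where "p = (i, j)" "i < j" "j < k" unfolding I_def by blast
    thus "card (E p) \<le> (n - 1) choose (k - 2)"
      using card_equal_pair[of i j k n] assms unfolding E_def by simp
  qed
  also have "\<dots> \<le> k * k * ((n - 1) choose (k - 2))"
    using card_mono[OF _ I_sub] by (simp add: mult_le_mono1)
  finally show ?thesis .
qed

section \<open>Compositions with distinct parts and strict partitions\<close>

definition strict_partitions :: "nat \<Rightarrow> nat \<Rightarrow> nat set set" where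
  "strict_partitions n k = {S. finite S \<and> card S = k \<and> 0 \<notin> S \<and> \<Sum>S = n}"

lemma finite_strict_partitions: "finite (strict_partitions n k)"
proof (rule finite_subset)
  show "strict_partitions n k \<subseteq> Pow {0..n}"
    unfolding strict_partitions_def using member_le_sum[of _ _ id] by fastforce
qed simp

text \<open>A composition with distinct parts is an ordering of its set of parts.\<close>
lemma card_distinct_compositions_le:
  "card (distinct_compositions n k) \<le> fact k * card (strict_partitions n k)"
proof -
  have "distinct_compositions n k \<subseteq> (\<Union>S\<in>strict_partitions n k. permutations_of_set S)"
  proof
    fix xs assume xs: "xs \<in> distinct_compositions n k"
    hence "set xs \<in> strict_partitions n k"
      unfolding distinct_compositions_def compositions_def strict_partitions_def
      by (auto simp: distinct_card distinct_sum_list_conv_Sum)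
    moreover have "xs \<in> permutations_of_set (set xs)"
      using xs by (simp add: distinct_compositions_def permutations_of_set_def)
    ultimately show "xs \<in> (\<Union>S\<in>strict_partitions n k. permutations_of_set S)" by blast
  qed
  hence "card (distinct_compositions n k)
           \<le> card (\<Union>S\<in>strict_partitions n k. permutations_of_set S)"
    by (intro card_mono) (auto simp: finite_strict_partitions)
  also have "\<dots> \<le> (\<Sum>S\<in>strict_partitions n k. card (permutations_of_set S))"
    by (rule card_UN_le[OF finite_strict_partitions])
  also have "\<dots> = (\<Sum>S\<in>strict_partitions n k. fact k)"
    by (intro sum.cong) (auto simp: strict_partitions_def)
  finally show ?thesis by (simp add: mult.commute)
qed

lemma strict_partitions_subset_shift:
  assumes "1 \<le> k"
  shows "strict_partitions n k \<subseteq> (\<lambda>T. Suc ` T) ` strict_partitions (n - k) k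
           \<union> (\<lambda>T. insert 1 (Suc ` T)) ` strict_partitions (n - k) (k - 1)"
proof
  fix S assume "S \<in> strict_partitions n k"
  hence S: "finite S" "card S = k" "0 \<notin> S" "\<Sum>S = n" unfolding strict_partitions_def by auto
  define T where "T = Suc -` S"
  have S_T: "S = Suc ` T"
    unfolding T_def using S(3) by (auto simp: image_iff) (metis not0_implies_Suc)
  have fin_T: "finite T" unfolding T_def using S(1) by (simp add: finite_vimageI)
  have card_T: "card T = k" using S(2) S_T card_image[of Suc T] by simp
  have sum_T: "\<Sum>T = n - k"
    using S(4) sum_Suc[of id T] card_T unfolding S_T by (simp add: sum.reindex)
  show "S \<in> (\<lambda>T. Suc ` T) ` strict_partitions (n - k) k
           \<union> (\<lambda>T. insert 1 (Suc ` T)) ` strict_partitions (n - k) (k - 1)"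
  proof (cases "0 \<in> T")
    case False
    hence "T \<in> strict_partitions (n - k) k"
      using fin_T card_T sum_T by (simp add: strict_partitions_def)
    thus ?thesis using S_T by blast
  next
    case True
    hence "T - {0} \<in> strict_partitions (n - k) (k - 1)"
      using fin_T card_T sum_T by (simp add: strict_partitions_def sum_diff1_nat)
    moreover have "S = insert 1 (Suc ` (T - {0}))" using S_T True by auto
    ultimately show ?thesis by blast
  qed
qed

lemma card_strict_partitions_rec:
  assumes "1 \<le> k"
  shows "card (strict_partitions n k)
           \<le> card (strict_partitions (n - k) k) + card (strict_partitions (n - k) (k - 1))"
proof -
  have "card (strict_partitions n k)
          \<le> card ((\<lambda>T. Suc ` T) ` strict_partitions (n - k) k
                  \<union> (\<lambda>T. insert 1 (Suc ` T)) ` strict_partitions (n - k) (k - 1))"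
    by (intro card_mono strict_partitions_subset_shift assms) (simp add: finite_strict_partitions)
  also have "\<dots> \<le> card (strict_partitions (n - k) k) + card (strict_partitions (n - k) (k - 1))"
    using card_Un_le card_image_le[OF finite_strict_partitions] by (meson add_mono order_trans)
  finally show ?thesis .
qed

section \<open>An upper bound for strict partitions\<close>

lemma binomial_add_lower: "(c choose Suc r) + d * (c choose r) \<le> (c + d) choose Suc r"
proof (induction d)
  case (Suc d)
  have "c choose r \<le> (c + d) choose r" by (rule binomial_right_mono) simp
  thus ?case using Suc by simp
qed simp

lemma binomial_add_upper: "(x + d) choose Suc r \<le> (x choose Suc r) + d * ((x + d) choose r)"
proof (induction d)
  case (Suc d)
  have mono: "(x + d) choose r \<le> (x + Suc d) choose r" by (rule binomial_right_mono) simp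
  hence "d * ((x + d) choose r) \<le> d * ((x + Suc d) choose r)" by (rule mult_le_mono2)
  moreover have "(x + Suc d) choose Suc r = ((x + d) choose r) + ((x + d) choose Suc r)" by simp
  ultimately show ?case using Suc mono unfolding mult_Suc by linarith
qed simp

lemma binomial_midpoint_convex_ordered:
  assumes "a \<le> b" "2 * c \<le> a + b"
  shows "2 * (c choose r) \<le> (a choose r) + (b choose r)"
proof (cases "c \<le> a")
  case True
  thus ?thesis using binomial_right_mono[of c a r] binomial_right_mono[of c b r] assms by linarith
next
  case False
  define d where "d = c - a"
  have cd: "c = a + d" "c + d \<le> b" using False assms d_def by auto
  show ?thesis
  proof (cases r)
    case (Suc r')
    have "c choose Suc r' \<le> (a choose Suc r') + d * (c choose r')"
      using binomial_add_upper[of a d r'] cd by simp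
    moreover have "(c choose Suc r') + d * (c choose r') \<le> b choose Suc r'"
      using binomial_add_lower[of c r' d] binomial_right_mono[OF cd(2), of "Suc r'"] by linarith
    ultimately show ?thesis unfolding Suc by linarith
  qed simp
qed

lemma binomial_midpoint_convex:
  assumes "2 * c \<le> a + b"
  shows "2 * (c choose r) \<le> (a choose r) + (b choose r)"
  using binomial_midpoint_convex_ordered[of a b c r] binomial_midpoint_convex_ordered[of b a c r]
    assms by (cases "a \<le> b") auto

lemma binomial_telescope: "(a + m) choose Suc r = (a choose Suc r) + (\<Sum>i<m. (a + i) choose r)"
  by (induction m) auto

text \<open>The binomial inequality that drives the induction of the strict partition bound:
  pairing the terms of the telescoping sum symmetrically and using convexity.\<close>
lemma binomial_step_inequality:
  assumes "2 \<le> k" "k \<le> A"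
  shows "((A - k) choose (k - 1)) + k * ((A - k div 2 - 1) choose (k - 2)) \<le> A choose (k - 1)"
proof -
  define r where "r = k - 2"
  define c where "c = A - k div 2 - 1"
  have kr: "k - 1 = Suc r" "k - 2 = r" using assms r_def by auto
  have tele: "A choose (k - 1) = ((A - k) choose (k - 1)) + (\<Sum>i<k. (A - k + i) choose r)"
    using binomial_telescope[of "A - k" k r] assms kr by simp
  have "(\<Sum>i<k. (A - k + (k - Suc i)) choose r) = (\<Sum>i<k. (A - k + i) choose r)"
    by (rule sum.nat_diff_reindex)
  hence "2 * (\<Sum>i<k. (A - k + i) choose r)
       = (\<Sum>i<k. ((A - k + i) choose r) + ((A - k + (k - Suc i)) choose r))"
    by (simp add: sum.distrib del: One_nat_def)
  also have "\<dots> \<ge> (\<Sum>i<k. 2 * (c choose r))"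
    by (rule sum_mono, rule binomial_midpoint_convex) (use assms c_def in auto)
  finally have "2 * (k * (c choose r)) \<le> 2 * (\<Sum>i<k. (A - k + i) choose r)" by simp
  thus ?thesis using tele kr c_def by simp
qed

text \<open>The shift s_k = sum_{i<k} floor(i/2) = floor((k-1)^2/4) in the strict partition bound.\<close>
definition floor_half_sum :: "nat \<Rightarrow> nat" where
  "floor_half_sum k = (\<Sum>i<k. i div 2)"

lemma floor_half_sum_Suc: "floor_half_sum (Suc k) = floor_half_sum k + k div 2"
  by (simp add: floor_half_sum_def)

lemma floor_half_sum_upper: "2 \<le> k \<Longrightarrow> 2 * (floor_half_sum k + 1) \<le> k * (k - 1)"
proof (induction k rule: nat_induct_at_least)
  case base then show ?case by (simp add: floor_half_sum_def numeral_2_eq_2)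
next
  case (Suc k)
  have "Suc k * (Suc k - 1) = k * (k - 1) + 2 * k" using Suc by (cases k) auto
  thus ?case using Suc by (simp add: floor_half_sum_Suc)
qed

lemma floor_half_sum_lower: "(k - 1)^2 \<le> 4 * floor_half_sum k + k"
proof (induction k)
  case (Suc k)
  have "k^2 = (k - 1)^2 + 2 * k - 1" if "k \<ge> 1"
    using that by (cases k) (auto simp: power2_eq_square)
  thus ?case using Suc by (cases "k = 0") (auto simp: floor_half_sum_Suc)
qed (simp add: floor_half_sum_def)

lemma card_mult_le_two_Sum: "finite S \<Longrightarrow> 0 \<notin> S \<Longrightarrow> card S * (card S + 1) \<le> 2 * \<Sum>S"
proof (induction "card S" arbitrary: S)
  case (Suc m)
  define M where "M = Max S"
  have M: "M \<in> S" using Suc M_def by (metis Max_in card_0_eq nat.distinct(1))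
  have "S \<subseteq> {1..M}" using Suc.prems M_def by (auto simp: Suc_le_eq intro: gr0I)
  hence "card S \<le> M" using card_mono[of "{1..M}" S] by simp
  moreover have "m = card (S - {M})" using Suc.hyps(2) M Suc.prems by simp
  hence "m * (m + 1) \<le> 2 * \<Sum>(S - {M})" using Suc.hyps(1) Suc.prems by simp
  moreover have "\<Sum>S = M + \<Sum>(S - {M})" using sum.remove[OF Suc.prems(1) M, of id] by simp
  ultimately show ?case using Suc.hyps(2)[symmetric] by (simp add: algebra_simps)
qed simp

lemma card_strict_partitions_one: "card (strict_partitions n 1) \<le> 1"
proof -
  have "strict_partitions n 1 \<subseteq> {{n}}" unfolding strict_partitions_def by (auto simp: card_Suc_eq)
  thus ?thesis using card_mono[of "{{n}}"] by fastforce
qed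

lemma strict_partitions_size:
  assumes "2 \<le> k" "strict_partitions n k \<noteq> {}"
  shows "k \<le> n - 1 - floor_half_sum k"
proof -
  obtain S where "S \<in> strict_partitions n k" using assms(2) by auto
  hence "k * (k + 1) \<le> 2 * n"
    using card_mult_le_two_Sum[of S] unfolding strict_partitions_def by auto
  moreover have "k * (k + 1) = k * (k - 1) + 2 * k" using assms(1) by (cases k) auto
  ultimately have "2 * (floor_half_sum k + 1) + 2 * k \<le> 2 * n"
    using floor_half_sum_upper[OF assms(1)] by linarith
  thus ?thesis by arith
qed

lemma fact_mult_card_strict_partitions_le:
  "1 \<le> k \<Longrightarrow> fact k * card (strict_partitions n k) \<le> (n - 1 - floor_half_sum k) choose (k - 1)"
proof (induction n arbitrary: k rule: less_induct)
  case (less n)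
  consider "k = 1" | "strict_partitions n k = {}" | "2 \<le> k" "strict_partitions n k \<noteq> {}"
    using less.prems by linarith
  thus ?case
  proof cases
    case 1
    thus ?thesis using card_strict_partitions_one[of n] by simp
  next
    case 3
    define A where "A = n - 1 - floor_half_sum k"
    have A: "k \<le> A" unfolding A_def using strict_partitions_size[OF 3] .
    hence "n - k < n" unfolding A_def using 3 by linarith
    note IH = less.IH[OF this]
    have "(k - 1) div 2 + k div 2 + 1 = k" using 3(1) by presburger
    moreover have "floor_half_sum k = floor_half_sum (k - 1) + (k - 1) div 2"
      using floor_half_sum_Suc[of "k - 1"] 3(1) by simp
    moreover have "n = A + 1 + floor_half_sum k" using A 3(1) unfolding A_def by linarith
    ultimately have "n - k - 1 - floor_half_sum (k - 1) = A - k div 2 - 1" by linarith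
    moreover have "1 \<le> k - 1" "k - 1 - 1 = k - 2" using 3(1) by auto
    ultimately have IH2: "fact (k - 1) * card (strict_partitions (n - k) (k - 1))
                  \<le> (A - k div 2 - 1) choose (k - 2)"
      using IH[of "k - 1"] by metis
    have "n - k - 1 - floor_half_sum k = A - k" unfolding A_def by simp
    hence IH1: "fact k * card (strict_partitions (n - k) k) \<le> (A - k) choose (k - 1)"
      using IH[of k] 3(1) by simp
    have fact_k: "fact k = k * fact (k - 1)" using 3(1) by (cases k) simp_all
    have "fact k * card (strict_partitions n k)
          \<le> fact k * (card (strict_partitions (n - k) k) + card (strict_partitions (n - k) (k - 1)))"
      using card_strict_partitions_rec[of k n] 3(1) by (intro mult_le_mono2) simp
    also have "\<dots> = fact k * card (strict_partitions (n - k) k)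
                    + k * (fact (k - 1) * card (strict_partitions (n - k) (k - 1)))"
      unfolding fact_k by (simp add: algebra_simps)
    also have "\<dots> \<le> ((A - k) choose (k - 1)) + k * ((A - k div 2 - 1) choose (k - 2))"
      using IH1 IH2 by (intro add_mono mult_le_mono2)
    also have "\<dots> \<le> A choose (k - 1)" by (rule binomial_step_inequality[OF 3(1) A])
    finally show ?thesis unfolding A_def .
  qed simp
qed

section \<open>Equal parts are rare when n/k^3 is large\<close>

lemma binomial_ratio:
  assumes "2 \<le> k" "k \<le> n"
  shows "(k - 1) * ((n - 1) choose (k - 1)) = (n - k + 1) * ((n - 1) choose (k - 2))"
proof -
  have eqs: "Suc (k - 2 + (n - k)) = n - 1" "Suc (k - 2) = k - 1" "Suc (n - k) = n - k + 1"
    using assms by auto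
  show ?thesis using Suc_times_binomial_add[of "k - 2" "n - k"] unfolding eqs .
qed

lemma prob_equal_parts_upper:
  assumes "2 \<le> k" "2 \<le> real n / real k ^ 3"
  shows "prob_equal_parts n k \<le> 2 / (real n / real k ^ 3)"
proof -
  define C where "C = (n - 1) choose (k - 1)"
  define C' where "C' = (n - 1) choose (k - 2)"
  have k_pos: "0 < real k" using assms by simp
  have "real k \<le> real k ^ 3" using power_increasing[of 1 3 "real k"] assms(1) by simp
  moreover have n_ge: "2 * real k ^ 3 \<le> real n" using assms(2) k_pos by (simp add: field_simps)
  ultimately have "2 * real k \<le> real n" by linarith
  hence kn: "k \<le> n" "real n / 2 \<le> real (n - k + 1)" by auto
  have C_pos: "0 < C" unfolding C_def using assms(1) kn
    by (simp del: binomial_Suc_Suc)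
  have ratio: "real C' = real (k - 1) * real C / real (n - k + 1)"
    using arg_cong[OF binomial_ratio[OF assms(1) kn(1)], of real]
    unfolding C_def C'_def of_nat_mult by (simp add: field_simps)
  have card_C: "card (compositions n k) = C"
    using card_compositions[of k n] assms(1) kn(1) by (simp add: C_def)
  have "real (card (equal_part_compositions n k)) \<le> real (k * k * C')"
    using card_equal_part_compositions_le[OF kn(1)] unfolding C'_def of_nat_le_iff .
  hence "prob_equal_parts n k \<le> real (k * k * C') / real C"
    unfolding prob_equal_parts_eq card_C by (rule divide_right_mono) simp
  also have "\<dots> = real k * real k * (real (k - 1) / real (n - k + 1))"
    using C_pos ratio by simp
  also have "\<dots> \<le> real k * real k * (real k / (real n / 2))"
    using kn k_pos by (intro mult_left_mono frac_le) auto
  also have "\<dots> = 2 / (real n / real k ^ 3)" by (simp add: field_simps power3_eq_cube)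
  finally show ?thesis .
qed

section \<open>Distinct parts are rare when n/k^3 is small\<close>

text \<open>Lowering the top of a binomial coefficient by one multiplies it by 1 - r/t \<le> 1 - r/m.\<close>
lemma binomial_pred_le:
  assumes "1 \<le> t" "t \<le> m"
  shows "real ((t - 1) choose r) \<le> real (t choose r) * (1 - real r / real m)"
proof (cases "r \<le> t")
  case True
  have t_pos: "0 < real t" using assms by simp
  have "real (t - r) * real (t choose r) = real t * real ((t - 1) choose r)"
    using arg_cong[OF binomial_absorb_comp[of t r], of real] unfolding of_nat_mult .
  hence "real ((t - 1) choose r) = real (t choose r) * (1 - real r / real t)"
    using True t_pos by (simp add: field_simps)
  also have "\<dots> \<le> real (t choose r) * (1 - real r / real m)"
    using assms t_pos by (intro mult_left_mono diff_left_mono divide_left_mono) auto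
  finally show ?thesis .
next
  case False
  thus ?thesis by (simp add: binomial_eq_0)
qed

lemma binomial_shrink:
  assumes "r \<le> m"
  shows "real ((m - s) choose r) \<le> real (m choose r) * (1 - real r / real m) ^ s"
proof (induction s)
  case (Suc s)
  define x where "x = 1 - real r / real m"
  have x_nonneg: "0 \<le> x" using assms unfolding x_def by (cases "m = 0") auto
  have "real ((m - Suc s) choose r) \<le> real ((m - s) choose r) * x"
  proof (cases "m - s = 0")
    case True
    thus ?thesis unfolding x_def by (cases r) auto
  next
    case False
    thus ?thesis using binomial_pred_le[of "m - s" m r] unfolding x_def by simp
  qed
  also have "\<dots> \<le> real (m choose r) * x ^ s * x"
    using Suc.IH x_nonneg unfolding x_def by (rule mult_right_mono)
  finally show ?case unfolding x_def power_Suc2 by (simp add: mult.assoc)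
qed simp

text \<open>The elementary estimate (1 - a)^s \<le> e^{-as} \<le> 1/(as).\<close>
lemma power_le_inverse:
  assumes "0 \<le> a" "a \<le> 1" "0 < real s * a"
  shows "(1 - a) ^ s \<le> 1 / (real s * a)"
proof -
  have "(1 - a) ^ s \<le> exp (- a) ^ s"
    using assms exp_ge_add_one_self[of "-a"] by (intro power_mono) auto
  also have "\<dots> = exp (real s * (- a))" by (rule exp_of_nat_mult[symmetric])
  also have "\<dots> = 1 / exp (real s * a)" by (simp add: exp_minus')
  also have "\<dots> \<le> 1 / (real s * a)"
  proof -
    have "real s * a \<le> exp (real s * a)" using exp_ge_add_one_self[of "real s * a"] by linarith
    thus ?thesis using assms by (intro divide_left_mono) auto
  qed
  finally show ?thesis .
qed

text \<open>(k - 1) s_k grows like k^3/4; we only need a fraction of that.\<close>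
lemma cube_le_floor_half_sum:
  assumes "6 \<le> k"
  shows "real k ^ 3 \<le> 16 * real (k - 1) * real (floor_half_sum k)"
proof -
  define x where "x = real k"
  have x6: "6 \<le> x" using assms unfolding x_def by simp
  have k1: "real (k - 1) = x - 1" using assms unfolding x_def by simp
  have "real ((k - 1)^2) \<le> real (4 * floor_half_sum k + k)"
    using floor_half_sum_lower[of k] by (simp only: of_nat_le_iff)
  hence "(x - 1)^2 - x \<le> 4 * real (floor_half_sum k)" using k1 unfolding x_def by simp
  hence "4 * (x - 1) * ((x - 1)^2 - x) \<le> 4 * (x - 1) * (4 * real (floor_half_sum k))"
    using x6 by (intro mult_left_mono) auto
  moreover have "4 * (x - 1) * ((x - 1)^2 - x) = x^3 + x^2 * (3 * x - 16) + (16 * x - 4)"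
    by (simp add: algebra_simps power2_eq_square power3_eq_cube)
  moreover have "0 \<le> x^2 * (3 * x - 16)" using x6 by simp
  ultimately have "x^3 \<le> 4 * (x - 1) * (4 * real (floor_half_sum k))" using x6 by linarith
  moreover have "4 * (x - 1) * (4 * real (floor_half_sum k))
                  = 16 * real (k - 1) * real (floor_half_sum k)" unfolding k1 by simp
  ultimately show ?thesis unfolding x_def by linarith
qed

lemma one_minus_prob_equal_parts_upper:
  assumes "6 \<le> k" "k \<le> n"
  shows "1 - prob_equal_parts n k \<le> 16 * (real n / real k ^ 3)"
proof -
  define m where "m = n - 1"
  define r where "r = k - 1"
  define s where "s = floor_half_sum k"
  define C where "C = m choose r"
  have C: "card (compositions n k) = C" "0 < C"
    using card_compositions[of k n] card_compositions_pos[of k n] assms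
    unfolding C_def m_def r_def by auto
  have rm: "r \<le> m" "0 < real r" "real m \<le> real n" using assms unfolding r_def m_def by auto
  have cube: "real k ^ 3 \<le> 16 * real r * real s"
    using cube_le_floor_half_sum[OF assms(1)] unfolding r_def s_def .
  moreover have "0 < real k ^ 3" using assms by simp
  ultimately have s_pos: "0 < real s" by (cases "s = 0") auto
  have "card (distinct_compositions n k) \<le> (m - s) choose r"
    using card_distinct_compositions_le[of n k] fact_mult_card_strict_partitions_le[of k n] assms
    unfolding m_def s_def r_def by linarith
  hence "1 - prob_equal_parts n k \<le> real ((m - s) choose r) / real C"
    using C by (simp add: one_minus_prob_equal_parts divide_right_mono)
  also have "\<dots> \<le> (1 - real r / real m) ^ s"
    using binomial_shrink[OF rm(1), of s] C(2) unfolding C_def by (simp add: field_simps)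
  also have "\<dots> \<le> 1 / (real s * (real r / real m))"
    using rm s_pos by (intro power_le_inverse) auto
  also have "\<dots> = real m / (real r * real s)" by simp
  also have "\<dots> \<le> real n / (real k ^ 3 / 16)"
    using rm s_pos cube assms by (intro frac_le) auto
  also have "\<dots> = 16 * (real n / real k ^ 3)" by simp
  finally show ?thesis .
qed

section \<open>The threshold n \<asymp> k^3\<close>

lemma prob_equal_parts_tendsto_0:
  fixes n k :: "nat \<Rightarrow> nat"
  assumes "\<And>m. 2 \<le> k m"
    and lim: "filterlim (\<lambda>m. real (n m) / real (k m) ^ 3) at_top sequentially"
  shows "(\<lambda>m. prob_equal_parts (n m) (k m)) \<longlonglongrightarrow> 0"
proof (rule Lim_null_comparison)
  have "eventually (\<lambda>m. 2 \<le> real (n m) / real (k m) ^ 3) sequentially"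
    using lim by (simp add: filterlim_at_top)
  thus "eventually (\<lambda>m. norm (prob_equal_parts (n m) (k m))
          \<le> 2 / (real (n m) / real (k m) ^ 3)) sequentially"
  proof eventually_elim
    case (elim m)
    thus ?case using prob_equal_parts_upper[OF assms(1) elim] prob_equal_parts_nonneg[of "n m" "k m"]
      by simp
  qed
  show "(\<lambda>m. 2 / (real (n m) / real (k m) ^ 3)) \<longlonglongrightarrow> 0"
    by (rule tendsto_divide_0[OF tendsto_const filterlim_at_top_imp_at_infinity[OF lim]])
qed

lemma six_le_of_small_ratio:
  assumes "1 \<le> k" "k \<le> n" "real n / real k ^ 3 < 1 / 36"
  shows "6 \<le> k"
proof (rule ccontr)
  assume "\<not> 6 \<le> k"
  hence "real k ^ 2 \<le> 36" using power_mono[of "real k" 6 2] by simp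
  moreover have k: "0 < real k" using assms(1) by simp
  ultimately have "1 / 36 \<le> 1 / real k ^ 2" by (intro divide_left_mono) auto
  also have "\<dots> = real k / real k ^ 3" using k by (simp add: power2_eq_square power3_eq_cube)
  also have "\<dots> \<le> real n / real k ^ 3" using assms(2) k(1) by (intro divide_right_mono) auto
  finally show False using assms(3) by linarith
qed

lemma prob_equal_parts_tendsto_1:
  fixes n k :: "nat \<Rightarrow> nat"
  assumes "\<And>m. 1 \<le> k m" "\<And>m. k m \<le> n m"
    and lim: "(\<lambda>m. real (n m) / real (k m) ^ 3) \<longlonglongrightarrow> 0"
  shows "(\<lambda>m. prob_equal_parts (n m) (k m)) \<longlonglongrightarrow> 1"
proof -
  have "(\<lambda>m. 1 - prob_equal_parts (n m) (k m)) \<longlonglongrightarrow> 0"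
  proof (rule Lim_null_comparison)
    have "eventually (\<lambda>m. real (n m) / real (k m) ^ 3 < 1 / 36) sequentially"
      using lim by (rule order_tendstoD) simp
    thus "eventually (\<lambda>m. norm (1 - prob_equal_parts (n m) (k m))
            \<le> 16 * (real (n m) / real (k m) ^ 3)) sequentially"
    proof eventually_elim
      case (elim m)
      hence "6 \<le> k m" using six_le_of_small_ratio assms(1,2) by blast
      thus ?case using one_minus_prob_equal_parts_upper[OF _ assms(2)]
          prob_equal_parts_le_1[of "n m" "k m"] by simp
    qed
    show "(\<lambda>m. 16 * (real (n m) / real (k m) ^ 3)) \<longlonglongrightarrow> 0"
      using tendsto_mult_right_zero[OF lim] by simp
  qed
  hence "(\<lambda>m. 1 - (1 - prob_equal_parts (n m) (k m))) \<longlonglongrightarrow> 1 - 0"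
    by (intro tendsto_diff tendsto_const)
  thus ?thesis by simp
qed

theorem mainTheorem3:
  fixes n k :: "nat \<Rightarrow> nat"
  assumes "\<And>m. k m \<ge> 2" and "\<And>m. n m \<ge> k m"
  shows "(filterlim (\<lambda>m. real (n m) / real (k m) ^ 3) at_top sequentially
            \<longrightarrow> (\<lambda>m. prob_equal_parts (n m) (k m)) \<longlonglongrightarrow> 0)
       \<and> ((\<lambda>m. real (n m) / real (k m) ^ 3) \<longlonglongrightarrow> 0
            \<longrightarrow> (\<lambda>m. prob_equal_parts (n m) (k m)) \<longlonglongrightarrow> 1)"
proof -
  have k_pos: "\<And>m. 1 \<le> k m" using assms(1) by (meson le_trans one_le_numeral)
  show ?thesis
    using prob_equal_parts_tendsto_0[of k n, OF assms(1)]
      prob_equal_parts_tendsto_1[of k n, OF k_pos assms(2)] by blast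
qed

end
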